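(* Let $N=\{1,\dots,n\}$ and let $F:2^N\to\mathbb{R}$ be quasi-submodular. Run the minimization procedure (described in the context) from $X_0=\emptyset$ and let $Q_+$ be its output, and from $X_0=N$ and let $S_+$ be its output. Then every local minimum $P$ of $F$ satisfies $Q_+\subseteq P\subseteq S_+$.
   Context: For $A\subseteq N$ and $i\in N$, write $A+i=A\cup\{i\}$, $A-i=A\setminus\{i\}$, and $F(i\mid A)=F(A+i)-F(A)$. $F$ is quasi-submodular if for all $X,Y\subseteq N$ both hold: $F(X\cap Y)\ge F(X)\Rightarrow F(Y)\ge F(X\cup Y)$, and $F(X\cap Y)>F(X)\Rightarrow F(Y)>F(X\cup Y)$. A set $X\subseteq N$ is a local minimum of $F$ if $F(X-i)\ge F(X)$ for all $i\in X$ and $F(X+j)\ge F(X)$ for all $j\in N\setminus X$. Minimization procedure: given $X_0\subseteq N$, for $t=0,1,2,\dots$: let $U_t=\{u\in N\setminus X_t: F(u\mid X_t)<0\}$ and $Y_t=X_t\cup U_t$; let $D_t=\{d\in X_t: F(d\mid Y_t-d)>0\}$ and $X_{t+1}=Y_t\setminus D_t$; if $X_{t+1}=X_t$, stop and output $X_t$; otherwise continue with $t+1$. *)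

theory Defs
  imports Complex_Main
begin

definition marg :: "(nat set \<Rightarrow> real) \<Rightarrow> nat \<Rightarrow> nat set \<Rightarrow> real" where
  "marg F i A = F (insert i A) - F A"

definition quasi_submodular :: "nat set \<Rightarrow> (nat set \<Rightarrow> real) \<Rightarrow> bool" where
  "quasi_submodular N F \<longleftrightarrow>
     (\<forall>X Y. X \<subseteq> N \<longrightarrow> Y \<subseteq> N \<longrightarrow>
        (F (X \<inter> Y) \<ge> F X \<longrightarrow> F Y \<ge> F (X \<union> Y)) \<and>
        (F (X \<inter> Y) > F X \<longrightarrow> F Y > F (X \<union> Y)))"

definition local_min :: "nat set \<Rightarrow> (nat set \<Rightarrow> real) \<Rightarrow> nat set \<Rightarrow> bool" where
  "local_min N F X \<longleftrightarrow> X \<subseteq> N \<and>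
     (\<forall>i\<in>X. F (X - {i}) \<ge> F X) \<and> (\<forall>j\<in>N - X. F (insert j X) \<ge> F X)"

definition min_step :: "nat set \<Rightarrow> (nat set \<Rightarrow> real) \<Rightarrow> nat set \<Rightarrow> nat set" where
  "min_step N F X =
     (let U = {u \<in> N - X. marg F u X < 0};
          Y = X \<union> U;
          D = {d \<in> X. marg F d (Y - {d}) > 0}
      in Y - D)"

definition min_iter :: "nat set \<Rightarrow> (nat set \<Rightarrow> real) \<Rightarrow> nat set \<Rightarrow> nat \<Rightarrow> nat set" where
  "min_iter N F X0 t = (min_step N F ^^ t) X0"

definition min_output :: "nat set \<Rightarrow> (nat set \<Rightarrow> real) \<Rightarrow> nat set \<Rightarrow> nat set \<Rightarrow> bool" where
  "min_output N F X0 Q \<longleftrightarrow>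
     (\<exists>t. min_iter N F X0 (Suc t) = min_iter N F X0 t \<and>
          (\<forall>s<t. min_iter N F X0 (Suc s) \<noteq> min_iter N F X0 s) \<and>
          Q = min_iter N F X0 t)"

end

theory Submission
  imports Defs
begin

text \<open>A local minimum \<open>P\<close> is an invariant barrier for the procedure. If \<open>X \<subseteq> P\<close> and adding
  \<open>u \<notin> P\<close> to \<open>X\<close> strictly decreases \<open>F\<close>, the strict half of quasi-submodularity (applied to
  \<open>X + u\<close> and \<open>P\<close>) makes adding \<open>u\<close> to \<open>P\<close> decrease \<open>F\<close> too, contradicting local minimality;
  so the iterates started below \<open>P\<close> stay below \<open>P\<close>. Dually, if \<open>P \<subseteq> Y\<close> and removing \<open>d \<in> P\<close>
  does not help \<open>P\<close>, the weak half shows that removing \<open>d\<close> does not help \<open>Y\<close>, so no element of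
  \<open>P\<close> is ever deleted from iterates started above \<open>P\<close>.\<close>

lemma quasi_submodular_insert_mono:
  assumes "quasi_submodular N F" "P \<subseteq> N" "insert u X \<subseteq> N" "X \<subseteq> P" "u \<notin> P"
    and "F (insert u X) < F X"
  shows "F (insert u P) < F P"
proof -
  have "insert u X \<inter> P = X" "insert u X \<union> P = insert u P"
    using assms(4,5) by auto
  with assms show ?thesis
    unfolding quasi_submodular_def by metis
qed

lemma quasi_submodular_remove_mono:
  assumes "quasi_submodular N F" "Y \<subseteq> N" "P \<subseteq> Y" "d \<in> P"
    and "F P \<le> F (P - {d})"
  shows "F Y \<le> F (Y - {d})"
proof -
  have "P \<inter> (Y - {d}) = P - {d}" "P \<union> (Y - {d}) = Y"
    using assms(3,4) by auto
  moreover have "P \<subseteq> N" "Y - {d} \<subseteq> N"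
    using assms(2,3) by auto
  ultimately show ?thesis
    using assms(1,5) unfolding quasi_submodular_def by metis
qed

lemma local_min_subset: "local_min N F P \<Longrightarrow> P \<subseteq> N"
  unfolding local_min_def by simp

lemma min_step_subset: "X \<subseteq> N \<Longrightarrow> min_step N F X \<subseteq> N"
  unfolding min_step_def Let_def by auto

lemma min_step_subset_local_min:
  assumes q: "quasi_submodular N F" and P: "local_min N F P" and XP: "X \<subseteq> P"
  shows "min_step N F X \<subseteq> P"
proof
  fix x assume "x \<in> min_step N F X"
  then have "x \<in> X \<or> x \<in> N - X \<and> marg F x X < 0"
    unfolding min_step_def Let_def by auto
  then show "x \<in> P"
  proof
    assume x: "x \<in> N - X \<and> marg F x X < 0"
    show "x \<in> P"
    proof (rule ccontr)
      assume "x \<notin> P"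
      moreover have "insert x X \<subseteq> N"
        using x XP local_min_subset[OF P] by auto
      ultimately have "F (insert x P) < F P"
        using quasi_submodular_insert_mono[OF q local_min_subset[OF P] _ XP] x
        unfolding marg_def by simp
      with P x \<open>x \<notin> P\<close> show False
        unfolding local_min_def by force
    qed
  qed (use XP in auto)
qed

lemma local_min_subset_min_step:
  assumes q: "quasi_submodular N F" and P: "local_min N F P"
    and XN: "X \<subseteq> N" and PX: "P \<subseteq> X"
  shows "P \<subseteq> min_step N F X"
proof
  fix d assume d: "d \<in> P"
  define Y where "Y = X \<union> {u \<in> N - X. marg F u X < 0}"
  have "Y \<subseteq> N" "P \<subseteq> Y"
    using XN PX unfolding Y_def by auto
  moreover have "F P \<le> F (P - {d})"
    using P d unfolding local_min_def by simp
  ultimately have "F Y \<le> F (Y - {d})"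
    using quasi_submodular_remove_mono[OF q] d by blast
  moreover have "insert d (Y - {d}) = Y"
    using \<open>P \<subseteq> Y\<close> d by auto
  ultimately have "\<not> marg F d (Y - {d}) > 0"
    unfolding marg_def by simp
  then show "d \<in> min_step N F X"
    using PX d unfolding min_step_def Let_def Y_def by auto
qed

lemma min_iter_Suc: "min_iter N F X0 (Suc t) = min_step N F (min_iter N F X0 t)"
  by (simp add: min_iter_def)

lemma min_iter_subset: "X0 \<subseteq> N \<Longrightarrow> min_iter N F X0 t \<subseteq> N"
  by (induction t) (simp_all add: min_iter_def min_step_subset)

lemma min_iter_subset_local_min:
  assumes "quasi_submodular N F" "local_min N F P" "X0 \<subseteq> P"
  shows "min_iter N F X0 t \<subseteq> P"
proof (induction t)
  case 0
  then show ?case using assms(3) by (simp add: min_iter_def)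
next
  case (Suc t)
  then show ?case
    using min_step_subset_local_min[OF assms(1,2)] by (simp add: min_iter_Suc)
qed

lemma local_min_subset_min_iter:
  assumes "quasi_submodular N F" "local_min N F P" "X0 \<subseteq> N" "P \<subseteq> X0"
  shows "P \<subseteq> min_iter N F X0 t"
proof (induction t)
  case 0
  then show ?case using assms(4) by (simp add: min_iter_def)
next
  case (Suc t)
  then show ?case
    using local_min_subset_min_step[OF assms(1,2) min_iter_subset[OF assms(3)]]
    by (simp add: min_iter_Suc)
qed

lemma min_output_iterate: "min_output N F X0 Q \<Longrightarrow> \<exists>t. Q = min_iter N F X0 t"
  unfolding min_output_def by blast

theorem lemma3:
  fixes n :: nat and F :: "nat set \<Rightarrow> real" and Qp Sp P :: "nat set"
  assumes "quasi_submodular {1..n} F"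
    and "min_output {1..n} F {} Qp"
    and "min_output {1..n} F {1..n} Sp"
    and "local_min {1..n} F P"
  shows "Qp \<subseteq> P \<and> P \<subseteq> Sp"
proof -
  obtain t where "Qp = min_iter {1..n} F {} t"
    using min_output_iterate[OF assms(2)] by blast
  moreover obtain s where "Sp = min_iter {1..n} F {1..n} s"
    using min_output_iterate[OF assms(3)] by blast
  ultimately show ?thesis
    using min_iter_subset_local_min[OF assms(1,4)]
      local_min_subset_min_iter[OF assms(1,4) order_refl local_min_subset[OF assms(4)]]
    by simp
qed

end
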